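(* Let $X$ be a countably infinite set and let $M_{2^{\aleph_0}}$ be the lattice consisting of an antichain of cardinality $2^{\aleph_0}$ together with a smallest and a largest element. Then there exists an injective order-preserving map $M_{2^{\aleph_0}}\to\mathrm{Cl}_{loc}(X)$ which preserves (binary) joins, and there exists an injective order-preserving map $M_{2^{\aleph_0}}\to\mathrm{Cl}_{loc}(X)$ which preserves (binary) meets.
   Context: A clone on $X$ is a set of finitary operations $X^n\to X$ ($n\ge1$) containing all projections $\pi^n_k(x_1,\dots,x_n)=x_k$ and closed under composition. Giving $X$ the discrete topology and $X^{X^n}$ the product topology, a clone is local if for each $n$ its set of $n$-ary operations is closed in $X^{X^n}$; equivalently, an $n$-ary operation $g$ belongs to the clone whenever for every finite $B\subseteq X^n$ some $n$-ary operation of the clone agrees with $g$ on $B$. $\mathrm{Cl}_{loc}(X)$ is the complete lattice of local clones on $X$ ordered by inclusion (meet is intersection, join is the smallest local clone containing the union). *)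

theory Defs
  imports "HOL-Library.Countable_Set"
begin

text \<open>An n-ary operation on the ground set (the universe of type 'a) is encoded as a pair
 (n, f) with n >= 1 and f :: (nat => 'a) => 'a depending only on the first n coordinates
 of its argument.  This encoding is canonical: every map X^n -> X has exactly one code.\<close>

type_synonym 'a op = "nat \<times> ((nat \<Rightarrow> 'a) \<Rightarrow> 'a)"

definition wf_op :: "'a op \<Rightarrow> bool" where
  "wf_op o' \<longleftrightarrow> fst o' \<ge> 1 \<and>
     (\<forall>x y. (\<forall>i<fst o'. x i = y i) \<longrightarrow> snd o' x = snd o' y)"

definition is_clone :: "'a op set \<Rightarrow> bool" where
  "is_clone C \<longleftrightarrow>
     (\<forall>o'\<in>C. wf_op o') \<and>
     (\<forall>n k. 1 \<le> n \<longrightarrow> k < n \<longrightarrow> (n, \<lambda>x. x k) \<in> C) \<and>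
     (\<forall>n f m gs. (n, f) \<in> C \<longrightarrow> 1 \<le> m \<longrightarrow> (\<forall>i<n. (m, gs i) \<in> C) \<longrightarrow>
        (m, \<lambda>x. f (\<lambda>i. gs i x)) \<in> C)"

definition is_local_clone :: "'a op set \<Rightarrow> bool" where
  "is_local_clone C \<longleftrightarrow> is_clone C \<and>
     (\<forall>n g. wf_op (n, g) \<longrightarrow>
        (\<forall>B. finite B \<longrightarrow> (\<exists>h. (n, h) \<in> C \<and> (\<forall>x\<in>B. h x = g x))) \<longrightarrow>
        (n, g) \<in> C)"

definition loc_join :: "'a op set \<Rightarrow> 'a op set \<Rightarrow> 'a op set" where
  "loc_join C D = \<Inter>{E. is_local_clone E \<and> C \<union> D \<subseteq> E}"

definition loc_meet :: "'a op set \<Rightarrow> 'a op set \<Rightarrow> 'a op set" where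
  "loc_meet C D = C \<inter> D"

datatype 'i mlat = MBot | MTop | MAt 'i

fun mle :: "'i mlat \<Rightarrow> 'i mlat \<Rightarrow> bool" where
  "mle MBot _ = True"
| "mle _ MTop = True"
| "mle (MAt a) (MAt b) = (a = b)"
| "mle _ _ = False"

definition mjoin :: "'i mlat \<Rightarrow> 'i mlat \<Rightarrow> 'i mlat" where
  "mjoin x y = (if mle x y then y else if mle y x then x else MTop)"

definition mmeet :: "'i mlat \<Rightarrow> 'i mlat \<Rightarrow> 'i mlat" where
  "mmeet x y = (if mle x y then x else if mle y x then y else MBot)"

end

theory Submission
  imports Defs
begin

text \<open>Every transformation monoid M on X gives the clone of essentially unary operations
  (x_1, ..., x_n) |-> u x_k with u in M; it is local when M is closed in X^X, and the
  assignment M |-> clone is injective and commutes with intersections.  The meet embedding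
  sends the atom i to the monoid {id, w_i} with w_i a retraction onto a set S_i; two
  distinct such monoids meet in {id}.  The join embedding sends i to the stabiliser of S_i:
  if X injects into S_j - S_i, every self-map u of X factors as g \<circ> h with g stabilising
  S_i and h stabilising S_j (h maps X injectively into S_j - S_i and g undoes it), so any
  clone containing both stabiliser clones contains all unary operations.  Countability of
  X provides 2^aleph_0 sets S_A with this property, one for each set A of naturals.\<close>

subsection \<open>Clones of essentially unary operations\<close>

definition unary_clone :: "('a \<Rightarrow> 'a) set \<Rightarrow> 'a op set" where
  "unary_clone M = {(n, \<lambda>x. u (x k)) | n k u. k < n \<and> u \<in> M}"

definition local_monoid :: "('a \<Rightarrow> 'a) set \<Rightarrow> bool" where
  "local_monoid M \<longleftrightarrow> id \<in> M \<and> (\<forall>u\<in>M. \<forall>v\<in>M. u \<circ> v \<in> M) \<and>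
     (\<forall>u. (\<forall>F. finite F \<longrightarrow> (\<exists>v\<in>M. \<forall>a\<in>F. v a = u a)) \<longrightarrow> u \<in> M)"

lemma unary_op_eq_imp_eq:
  assumes "(\<lambda>x :: nat \<Rightarrow> 'a. u (x k)) = (\<lambda>x. v (x j))"
  shows "u = v"
proof
  fix a show "u a = v a" using fun_cong[OF assms, of "\<lambda>_. a"] by simp
qed

lemma unary_clone_iff:
  "(n, f) \<in> unary_clone M \<longleftrightarrow> (\<exists>k u. k < n \<and> u \<in> M \<and> f = (\<lambda>x. u (x k)))"
  unfolding unary_clone_def by auto

lemma unary_op_mem_unary_clone_iff:
  "k < n \<Longrightarrow> (n, \<lambda>x. u (x k)) \<in> unary_clone M \<longleftrightarrow> u \<in> M"
  unfolding unary_clone_iff by (blast dest: unary_op_eq_imp_eq)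

lemma unary_clone_mono: "M \<subseteq> N \<Longrightarrow> unary_clone M \<subseteq> unary_clone N"
  unfolding unary_clone_def by blast

lemma unary_clone_eq_iff: "unary_clone M = unary_clone N \<longleftrightarrow> M = N"
  using unary_op_mem_unary_clone_iff[of 0 1 _ M] unary_op_mem_unary_clone_iff[of 0 1 _ N]
  by auto

lemma inj_unary_clone: "inj unary_clone"
  by (rule injI) (simp add: unary_clone_eq_iff)

lemma unary_clone_Int: "unary_clone M \<inter> unary_clone N = unary_clone (M \<inter> N)"
  unfolding unary_clone_def by (auto dest: unary_op_eq_imp_eq)

lemma is_clone_unary_clone:
  assumes "local_monoid M"
  shows "is_clone (unary_clone M)"
  unfolding is_clone_def
proof (intro conjI allI impI ballI)
  fix o' assume "o' \<in> unary_clone M"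
  then show "wf_op o'" by (auto simp: unary_clone_def wf_op_def)
next
  fix n k :: nat assume "k < n"
  then show "(n, \<lambda>x. x k) \<in> unary_clone M"
    using unary_op_mem_unary_clone_iff[of k n id M] assms by (simp add: local_monoid_def)
next
  fix n f m gs assume f: "(n, f) \<in> unary_clone M" and gs: "\<forall>i<n. (m, gs i) \<in> unary_clone M"
  from f obtain k u where k: "k < n" "u \<in> M" "f = (\<lambda>x. u (x k))"
    unfolding unary_clone_iff by blast
  from gs k(1) obtain j v where j: "j < m" "v \<in> M" "gs k = (\<lambda>x. v (x j))"
    unfolding unary_clone_iff by blast
  have "u \<circ> v \<in> M" using assms k(2) j(2) by (simp add: local_monoid_def)
  then have "(m, \<lambda>x. (u \<circ> v) (x j)) \<in> unary_clone M"
    using j(1) by (simp only: unary_op_mem_unary_clone_iff)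
  then show "(m, \<lambda>x. f (\<lambda>i. gs i x)) \<in> unary_clone M" using k(3) j(3) by simp
qed

text \<open>Otherwise every coordinate k has two arguments that agree at k but are separated by g;
  these finitely many arguments separate g from every operation u (x_k).\<close>
lemma locally_unary_imp_depends_on_one_coord:
  assumes "\<forall>B. finite B \<longrightarrow> (\<exists>h. (n, h) \<in> unary_clone M \<and> (\<forall>x\<in>B. h x = g x))"
  shows "\<exists>k<n. \<forall>x y. x k = y k \<longrightarrow> g x = g y"
proof (rule ccontr)
  assume "\<not> ?thesis"
  then have "\<forall>k\<in>{..<n}. \<exists>xy. fst xy k = snd xy k \<and> g (fst xy) \<noteq> g (snd xy)" by auto
  then obtain xy where xy: "\<And>k. k < n \<Longrightarrow> fst (xy k) k = snd (xy k) k \<and> g (fst (xy k)) \<noteq> g (snd (xy k))"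
    by (metis lessThan_iff)
  have "finite ((fst \<circ> xy) ` {..<n} \<union> (snd \<circ> xy) ` {..<n})" by simp
  then obtain h where h: "(n, h) \<in> unary_clone M"
    and agree: "\<forall>x\<in>(fst \<circ> xy) ` {..<n} \<union> (snd \<circ> xy) ` {..<n}. h x = g x"
    using assms by blast
  from h obtain j v where j: "j < n" "h = (\<lambda>x. v (x j))" unfolding unary_clone_iff by blast
  have "g (fst (xy j)) = h (fst (xy j))" "h (snd (xy j)) = g (snd (xy j))"
    using agree j(1) by auto
  moreover have "h (fst (xy j)) = h (snd (xy j))" using j xy by simp
  ultimately have "g (fst (xy j)) = g (snd (xy j))" by simp
  then show False using xy[OF j(1)] by blast
qed

lemma is_local_clone_unary_clone:
  assumes "local_monoid M"
  shows "is_local_clone (unary_clone M)"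
  unfolding is_local_clone_def
proof (intro conjI allI impI)
  show "is_clone (unary_clone M)" using assms by (rule is_clone_unary_clone)
next
  fix n g assume wf: "wf_op (n, g)"
    and loc: "\<forall>B. finite B \<longrightarrow> (\<exists>h. (n, h) \<in> unary_clone M \<and> (\<forall>x\<in>B. h x = g x))"
  from locally_unary_imp_depends_on_one_coord[OF loc]
  obtain k where k: "k < n" "\<forall>x y. x k = y k \<longrightarrow> g x = g y" by blast
  define u where "u a = g (\<lambda>_. a)" for a
  have g_eq: "g = (\<lambda>x. u (x k))"
  proof
    fix x show "g x = u (x k)" unfolding u_def using k(2)[rule_format, of x "\<lambda>_. x k"] by simp
  qed
  have "\<exists>v\<in>M. \<forall>a\<in>F. v a = u a" if "finite F" for F
  proof -
    have "finite ((\<lambda>a. \<lambda>_ :: nat. a) ` F)" using that by simp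
    from loc[rule_format, OF this] obtain h
      where h: "(n, h) \<in> unary_clone M" "\<forall>x\<in>(\<lambda>a. \<lambda>_. a) ` F. h x = g x" by blast
    from h(2) have agree: "\<forall>a\<in>F. h (\<lambda>_. a) = g (\<lambda>_. a)" by blast
    from h(1) obtain j v where "v \<in> M" "h = (\<lambda>x. v (x j))" unfolding unary_clone_iff by blast
    then show ?thesis using agree unfolding u_def by auto
  qed
  then have "u \<in> M" using assms unfolding local_monoid_def by blast
  then show "(n, g) \<in> unary_clone M" using k(1) by (simp add: g_eq unary_op_mem_unary_clone_iff)
qed

lemma clone_comp_unary:
  assumes "is_clone E" "(1, \<lambda>y. g (y 0)) \<in> E" "(m, h) \<in> E" "1 \<le> m"
  shows "(m, \<lambda>x. g (h x)) \<in> E"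
  using assms unfolding is_clone_def
  by (elim conjE allE[of _ 1] allE[of _ "\<lambda>y. g (y 0)"] allE[of _ m] allE[of _ "\<lambda>_. h"]) simp

lemma unary_clone_UNIV_subset:
  fixes M N :: "('a \<Rightarrow> 'a) set" and E :: "'a op set"
  assumes "is_clone E" "unary_clone M \<union> unary_clone N \<subseteq> E"
    and factor: "\<And>u. \<exists>g\<in>M. \<exists>h\<in>N. u = g \<circ> h"
  shows "unary_clone UNIV \<subseteq> E"
proof
  fix o' :: "'a op" assume "o' \<in> unary_clone UNIV"
  then obtain m k and u :: "'a \<Rightarrow> 'a" where o': "o' = (m, \<lambda>x. u (x k))" "k < m"
    by (auto simp: unary_clone_def)
  obtain g h where gh: "g \<in> M" "h \<in> N" "u = g \<circ> h" using factor by blast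
  have "(1, \<lambda>y. g (y 0)) \<in> E" "(m, \<lambda>x. h (x k)) \<in> E"
    using assms(2) gh o'(2) unary_op_mem_unary_clone_iff by blast+
  from clone_comp_unary[OF assms(1) this] show "o' \<in> E" using o' gh(3) by simp
qed

lemma loc_join_eqI:
  assumes "is_local_clone E" "C \<union> D \<subseteq> E" "\<And>E'. is_local_clone E' \<Longrightarrow> C \<union> D \<subseteq> E' \<Longrightarrow> E \<subseteq> E'"
  shows "loc_join C D = E"
  unfolding loc_join_def using assms by blast

lemma loc_join_absorb2: "is_local_clone D \<Longrightarrow> C \<subseteq> D \<Longrightarrow> loc_join C D = D"
  by (rule loc_join_eqI) auto

lemma loc_join_absorb1: "is_local_clone C \<Longrightarrow> D \<subseteq> C \<Longrightarrow> loc_join C D = C"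
  by (rule loc_join_eqI) auto

lemma local_monoid_UNIV: "local_monoid UNIV"
  unfolding local_monoid_def by simp

lemma local_monoid_finite:
  assumes "finite M" "id \<in> M" "\<forall>u\<in>M. \<forall>v\<in>M. u \<circ> v \<in> M"
  shows "local_monoid M"
  unfolding local_monoid_def
proof (intro conjI assms allI impI)
  fix u assume agree: "\<forall>F. finite F \<longrightarrow> (\<exists>v\<in>M. \<forall>a\<in>F. v a = u a)"
  show "u \<in> M"
  proof (rule ccontr)
    assume "u \<notin> M"
    then have "\<forall>v\<in>M. \<exists>a. v a \<noteq> u a" by (metis ext)
    then obtain a where a: "\<forall>v\<in>M. v (a v) \<noteq> u (a v)" by metis
    show False using agree[rule_format, of "a ` M"] a \<open>finite M\<close> by auto
  qed
qed

definition stabilizer :: "'a set \<Rightarrow> ('a \<Rightarrow> 'a) set" where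
  "stabilizer S = {u. u ` S \<subseteq> S}"

lemma local_monoid_stabilizer: "local_monoid (stabilizer S)"
  unfolding local_monoid_def stabilizer_def
proof (intro conjI allI impI ballI)
  fix u assume agree: "\<forall>F. finite F \<longrightarrow> (\<exists>v\<in>{u. u ` S \<subseteq> S}. \<forall>a\<in>F. v a = u a)"
  have "u a \<in> S" if "a \<in> S" for a using agree[rule_format, of "{a}"] that by auto
  then show "u \<in> {u. u ` S \<subseteq> S}" by auto
qed auto

lemma const_mem_stabilizer_iff: "S \<noteq> {} \<Longrightarrow> (\<lambda>_. c) \<in> stabilizer S \<longleftrightarrow> c \<in> S"
  unfolding stabilizer_def by auto

lemma stabilizer_factorization:
  fixes f u :: "'a \<Rightarrow> 'a"
  assumes "inj f" "range f \<subseteq> T - S"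
  shows "\<exists>g\<in>stabilizer S. \<exists>h\<in>stabilizer T. u = g \<circ> h"
proof (intro bexI)
  define g where "g y = (if y \<in> range f then u (inv f y) else y)" for y
  show "u = g \<circ> f" unfolding g_def using assms(1) by (auto simp: inv_f_f)
  show "g \<in> stabilizer S" "f \<in> stabilizer T"
    unfolding g_def stabilizer_def using assms(2) by auto
qed

definition retraction :: "'a set \<Rightarrow> 'a \<Rightarrow> 'a \<Rightarrow> 'a" where
  "retraction R c x = (if x \<in> R then x else c)"

lemma retraction_idem: "c \<in> R \<Longrightarrow> retraction R c \<circ> retraction R c = retraction R c"
  by (auto simp: retraction_def)

lemma fixpoints_retraction: "c \<in> R \<Longrightarrow> {x. retraction R c x = x} = R"
  by (auto simp: retraction_def)

lemma inj_case_mlat: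
  assumes "inj f" "b \<noteq> t" "b \<notin> range f" "t \<notin> range f"
  shows "inj (case_mlat b t f)"
proof (rule injI)
  fix x y assume "case_mlat b t f x = case_mlat b t f y"
  then show "x = y" using assms by (cases x; cases y) (auto simp: inj_eq)
qed

lemma case_mlat_mono:
  fixes b t :: "'b :: order"
  assumes "\<And>i. b \<le> f i \<and> f i \<le> t" "mle x y"
  shows "case_mlat b t f x \<le> case_mlat b t f y"
  using assms by (cases x; cases y) (auto intro: order_trans)

lemma mjoin_hom:
  assumes "\<And>x y. mle x y \<Longrightarrow> J (g x) (g y) = g y \<and> J (g y) (g x) = g y"
    and "\<And>i j. i \<noteq> j \<Longrightarrow> J (g (MAt i)) (g (MAt j)) = g MTop"
  shows "g (mjoin x y) = J (g x) (g y)"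
  using assms by (cases x; cases y) (auto simp: mjoin_def)

lemma mmeet_hom:
  assumes "\<And>x y. mle x y \<Longrightarrow> J (g x) (g y) = g x \<and> J (g y) (g x) = g x"
    and "\<And>i j. i \<noteq> j \<Longrightarrow> J (g (MAt i)) (g (MAt j)) = g MBot"
  shows "g (mmeet x y) = J (g x) (g y)"
  using assms by (cases x; cases y) (auto simp: mmeet_def)

definition local_clone_embedding :: "('i mlat \<Rightarrow> 'a op set) \<Rightarrow> bool" where
  "local_clone_embedding \<phi> \<longleftrightarrow>
     (\<forall>x. is_local_clone (\<phi> x)) \<and> inj \<phi> \<and> (\<forall>x y. mle x y \<longrightarrow> \<phi> x \<subseteq> \<phi> y)"

lemma local_clone_embedding_unary_clone:
  fixes F :: "'i \<Rightarrow> ('a \<Rightarrow> 'a) set"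
  assumes "\<And>i. local_monoid (F i)" "inj F" "\<And>i. F i \<noteq> {id}" "\<And>i. F i \<noteq> UNIV"
  shows "local_clone_embedding (\<lambda>z. unary_clone (case_mlat {id} UNIV F z))"
  unfolding local_clone_embedding_def
proof (intro conjI allI impI)
  fix z show "is_local_clone (unary_clone (case_mlat {id} UNIV F z))"
    using assms(1) local_monoid_UNIV local_monoid_finite[of "{id}"]
    by (cases z) (auto intro: is_local_clone_unary_clone)
next
  have "{id} \<noteq> (UNIV :: ('a \<Rightarrow> 'a) set)"
  proof
    assume "{id} = (UNIV :: ('a \<Rightarrow> 'a) set)"
    then have "F undefined \<subseteq> {id}" by simp
    moreover have "id \<in> F undefined" using assms(1) by (simp add: local_monoid_def)
    ultimately have "F undefined = {id}" by blast
    then show False using assms(3) by blast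
  qed
  then have "inj (case_mlat {id} UNIV F)"
    using assms(2-4) by (intro inj_case_mlat) (auto dest: sym)
  then show "inj (\<lambda>z. unary_clone (case_mlat {id} UNIV F z))"
    using inj_compose[OF inj_unary_clone] by (simp add: comp_def)
next
  fix x y :: "'i mlat" assume "mle x y"
  then show "unary_clone (case_mlat {id} UNIV F x) \<subseteq> unary_clone (case_mlat {id} UNIV F y)"
    using assms(1) by (intro unary_clone_mono case_mlat_mono) (auto simp: local_monoid_def)
qed

subsection \<open>The two embeddings\<close>

lemma meet_embedding_of_retractions:
  fixes S :: "'i \<Rightarrow> 'a set"
  assumes "inj S" "\<And>i. S i \<noteq> {}" "\<And>i. S i \<noteq> UNIV"
  shows "\<exists>\<psi> :: 'i mlat \<Rightarrow> 'a op set. local_clone_embedding \<psi> \<and>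
           (\<forall>x y. \<psi> (mmeet x y) = loc_meet (\<psi> x) (\<psi> y))"
proof -
  have "\<forall>i. \<exists>c. c \<in> S i" using assms(2) by blast
  then obtain c where c: "\<And>i. c i \<in> S i" by metis
  define w where "w i = retraction (S i) (c i)" for i
  define F where "F i = {id, w i}" for i
  have w_idem: "w i \<circ> w i = w i" for i using c by (simp add: w_def retraction_idem)
  have w_inj: "w i = w j \<Longrightarrow> i = j" for i j
    using fixpoints_retraction[OF c] assms(1) unfolding w_def by (metis injD)
  have w_ne_id: "w i \<noteq> id" for i
    using fixpoints_retraction[OF c, of i] assms(3) unfolding w_def by force
  have F_ne_UNIV: "F i \<noteq> UNIV" for i
  proof -
    obtain d where d: "d \<notin> S i" using assms(3) by blast
    have "v (c i) = c i" if "v \<in> F i" for v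
      using that c unfolding F_def w_def retraction_def by auto
    then have "(\<lambda>_. d) \<notin> F i" using d c by metis
    then show ?thesis by blast
  qed
  have F_meet: "F i \<inter> F j = {id}" if "i \<noteq> j" for i j
    using w_inj w_ne_id that unfolding F_def by auto
  have F_local: "local_monoid (F i)" for i
    using w_idem by (intro local_monoid_finite) (auto simp: F_def)
  define \<psi> where "\<psi> = (\<lambda>z. unary_clone (case_mlat {id} UNIV F z))"
  have "inj F" using w_inj w_ne_id unfolding F_def by (intro injI) (metis doubleton_eq_iff)
  moreover have "F i \<noteq> {id}" for i using w_ne_id unfolding F_def by auto
  ultimately have emb: "local_clone_embedding \<psi>"
    unfolding \<psi>_def using F_local F_ne_UNIV by (intro local_clone_embedding_unary_clone)
  have "\<psi> (mmeet x y) = \<psi> x \<inter> \<psi> y" for x y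
  proof (rule mmeet_hom)
    show "\<psi> x \<inter> \<psi> y = \<psi> x \<and> \<psi> y \<inter> \<psi> x = \<psi> x" if "mle x y" for x y
      using emb that unfolding local_clone_embedding_def by blast
    show "\<psi> (MAt i) \<inter> \<psi> (MAt j) = \<psi> MBot" if "i \<noteq> j" for i j
      using F_meet[OF that] by (simp add: \<psi>_def unary_clone_Int)
  qed
  with emb show ?thesis unfolding loc_meet_def by blast
qed

lemma inj_if_injective_copies:
  fixes S :: "'i \<Rightarrow> 'a set"
  assumes "\<And>i j. i \<noteq> j \<Longrightarrow> \<exists>f :: 'a \<Rightarrow> 'a. inj f \<and> range f \<subseteq> S j - S i"
  shows "inj S"
proof (rule injI)
  fix i j assume "S i = S j"
  then have "\<not> range f \<subseteq> S j - S i" for f :: "'a \<Rightarrow> 'a" by simp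
  then show "i = j" using assms by blast
qed

lemma join_embedding_of_stabilizers:
  fixes S :: "'i \<Rightarrow> 'a set"
  assumes copy: "\<And>i j. i \<noteq> j \<Longrightarrow> \<exists>f :: 'a \<Rightarrow> 'a. inj f \<and> range f \<subseteq> S j - S i"
    and "\<And>i. S i \<noteq> {}" "\<And>i. S i \<noteq> UNIV"
  shows "\<exists>\<phi> :: 'i mlat \<Rightarrow> 'a op set. local_clone_embedding \<phi> \<and>
           (\<forall>x y. \<phi> (mjoin x y) = loc_join (\<phi> x) (\<phi> y))"
proof -
  define F where "F i = stabilizer (S i)" for i
  define \<phi> where "\<phi> = (\<lambda>z. unary_clone (case_mlat {id} UNIV F z))"
  have "inj F"
  proof (rule injI)
    fix i j assume "F i = F j"
    then have "S i = S j" using const_mem_stabilizer_iff[OF assms(2)] unfolding F_def by blast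
    then show "i = j" using inj_if_injective_copies copy by (metis injD)
  qed
  moreover have "F i \<noteq> {id}" for i
  proof
    assume "F i = {id}"
    obtain c d where "c \<in> S i" "d \<notin> S i" using assms(2,3) by blast
    then have "(\<lambda>_. c) = id" using \<open>F i = {id}\<close> const_mem_stabilizer_iff[OF assms(2)] F_def by blast
    then show False using \<open>c \<in> S i\<close> \<open>d \<notin> S i\<close> by (metis id_apply)
  qed
  moreover have "F i \<noteq> UNIV" for i
    using assms(3) const_mem_stabilizer_iff[OF assms(2)] unfolding F_def by blast
  ultimately have emb: "local_clone_embedding \<phi>"
    unfolding \<phi>_def F_def using local_monoid_stabilizer by (intro local_clone_embedding_unary_clone)
  have atoms: "loc_join (unary_clone (F i)) (unary_clone (F j)) = unary_clone UNIV" if ij: "i \<noteq> j" for i j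
  proof (rule loc_join_eqI)
    show "is_local_clone (unary_clone (UNIV :: ('a \<Rightarrow> 'a) set))"
      by (rule is_local_clone_unary_clone[OF local_monoid_UNIV])
    show "unary_clone (F i) \<union> unary_clone (F j) \<subseteq> unary_clone UNIV"
      using unary_clone_mono by blast
    fix E assume E: "is_local_clone E" "unary_clone (F i) \<union> unary_clone (F j) \<subseteq> E"
    obtain f :: "'a \<Rightarrow> 'a" where f: "inj f" "range f \<subseteq> S j - S i" using copy[OF ij] by blast
    show "unary_clone UNIV \<subseteq> E"
    proof (rule unary_clone_UNIV_subset)
      show "is_clone E" using E(1) by (simp add: is_local_clone_def)
      show "unary_clone (F i) \<union> unary_clone (F j) \<subseteq> E" by (rule E(2))
      show "\<exists>g\<in>F i. \<exists>h\<in>F j. u = g \<circ> h" for u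
        unfolding F_def using f by (rule stabilizer_factorization)
    qed
  qed
  have "\<phi> (mjoin x y) = loc_join (\<phi> x) (\<phi> y)" for x y
  proof (rule mjoin_hom)
    show "loc_join (\<phi> x) (\<phi> y) = \<phi> y \<and> loc_join (\<phi> y) (\<phi> x) = \<phi> y" if "mle x y" for x y
    proof -
      have "\<phi> x \<subseteq> \<phi> y" "is_local_clone (\<phi> y)"
        using emb that unfolding local_clone_embedding_def by blast+
      then show ?thesis by (simp add: loc_join_absorb1 loc_join_absorb2)
    qed
    show "loc_join (\<phi> (MAt i)) (\<phi> (MAt j)) = \<phi> MTop" if "i \<noteq> j" for i j
      using atoms[OF that] by (simp add: \<phi>_def)
  qed
  with emb show ?thesis by blast
qed

subsection \<open>Continuum many subsets of a countably infinite set\<close>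

lemma countable_infinite_set_family:
  assumes "countable (UNIV :: 'a set)" "infinite (UNIV :: 'a set)"
  obtains S :: "nat set \<Rightarrow> 'a set"
  where "\<And>A B. A \<noteq> B \<Longrightarrow> \<exists>f :: 'a \<Rightarrow> 'a. inj f \<and> range f \<subseteq> S B - S A"
    and "\<And>A. S A \<noteq> {}" and "\<And>A. S A \<noteq> UNIV"
proof -
  obtain e :: "nat \<Rightarrow> 'a" where e: "inj e" using infinite_countable_subset[OF assms(2)] by blast
  obtain t :: "'a \<Rightarrow> nat" where t: "inj t" using assms(1) by (blast elim: countableE)
  define b :: "nat \<times> bool \<times> nat \<Rightarrow> 'a" where "b = e \<circ> to_nat"
  have b_eq: "b p = b q \<longleftrightarrow> p = q" for p q using e by (simp add: b_def inj_eq)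
  define S where "S A = b ` {(n, p, m). p = (n \<in> A)}" for A
  have copies: "\<exists>f :: 'a \<Rightarrow> 'a. inj f \<and> range f \<subseteq> S B - S A" if "A \<noteq> B" for A B
  proof -
    obtain n where "(n \<in> A) \<noteq> (n \<in> B)" using \<open>A \<noteq> B\<close> by blast
    then have "inj (\<lambda>x. b (n, n \<in> B, t x)) \<and> range (\<lambda>x. b (n, n \<in> B, t x)) \<subseteq> S B - S A"
      using t by (auto simp: S_def b_eq inj_def)
    then show ?thesis by blast
  qed
  have nonempty: "S A \<noteq> {}" for A unfolding S_def by auto
  have "b (0, 0 \<notin> A, 0) \<notin> S A" for A by (auto simp: S_def b_eq)
  then have proper: "S A \<noteq> UNIV" for A by blast
  show thesis by (rule that[OF copies nonempty proper])
qed

theorem proposition2p11: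
  assumes "countable (UNIV :: 'a set)" and "infinite (UNIV :: 'a set)"
  shows "(\<exists>\<phi> :: nat set mlat \<Rightarrow> 'a op set.
            (\<forall>x. is_local_clone (\<phi> x)) \<and> inj \<phi> \<and>
            (\<forall>x y. mle x y \<longrightarrow> \<phi> x \<subseteq> \<phi> y) \<and>
            (\<forall>x y. \<phi> (mjoin x y) = loc_join (\<phi> x) (\<phi> y)))
       \<and> (\<exists>\<psi> :: nat set mlat \<Rightarrow> 'a op set.
            (\<forall>x. is_local_clone (\<psi> x)) \<and> inj \<psi> \<and>
            (\<forall>x y. mle x y \<longrightarrow> \<psi> x \<subseteq> \<psi> y) \<and>
            (\<forall>x y. \<psi> (mmeet x y) = loc_meet (\<psi> x) (\<psi> y)))"
proof -
  obtain S :: "nat set \<Rightarrow> 'a set"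
    where copy: "\<And>A B. A \<noteq> B \<Longrightarrow> \<exists>f :: 'a \<Rightarrow> 'a. inj f \<and> range f \<subseteq> S B - S A"
      and "\<And>A. S A \<noteq> {}" "\<And>A. S A \<noteq> UNIV"
    using countable_infinite_set_family[OF assms] by metis
  moreover have "inj S" using copy by (rule inj_if_injective_copies)
  ultimately show ?thesis
    using join_embedding_of_stabilizers[of S] meet_embedding_of_retractions[of S]
    unfolding local_clone_embedding_def by blast
qed

end
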